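(* Define $f_1(m_1,m_2)=33m_1+49m_2$ and, for every $t\geq 2$, $$f_t(m_1,m_2)=f_{t-1}\big(f_{t-1}(32m_1+49m_2,\,m_1+m_2-1),\,32m_1+49m_2\big).$$ Let $m_1,m_2$ and $n_1,\ldots,n_t$ be positive integers such that $m_2\geq n_i\geq 2\lceil \log (f_t(m_1,m_2))\rceil+2$ for each $1\leq i\leq t$. Then $$R(C_{n_1},\ldots,C_{n_t},K_{m_1,m_2})\leq f_t(m_1,m_2).$$
   Context: $C_k$ denotes the cycle on $k$ vertices and $K_{a,b}$ the complete bipartite graph with parts of sizes $a$ and $b$. For graphs $G_1,\ldots,G_k$, the Ramsey number $R(G_1,\ldots,G_k)$ is the smallest integer $N$ such that for every coloring of the edges of the complete graph $K_N$ with colors $1,\ldots,k$ there is, for some $i$, a copy of $G_i$ all of whose edges have color $i$. $\log$ denotes the logarithm to base $2$. *)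

theory Defs
  imports Complex_Main
begin

text \<open>A (finite simple) graph is given by a vertex set and a set of edges, each edge a 2-set.\<close>
type_synonym graph = "nat set \<times> nat set set"

definition cycle_graph :: "nat \<Rightarrow> graph" where
  "cycle_graph n = ({0..<n}, {{j, (j + 1) mod n} | j. j < n})"

definition complete_bipartite :: "nat \<Rightarrow> nat \<Rightarrow> graph" where
  "complete_bipartite a b = ({0..<a+b}, {{i, j} | i j. i < a \<and> a \<le> j \<and> j < a + b})"

definition is_colouring :: "nat \<Rightarrow> nat \<Rightarrow> (nat \<Rightarrow> nat \<Rightarrow> nat) \<Rightarrow> bool" where
  "is_colouring N k c \<longleftrightarrow>
     (\<forall>x y. x < N \<longrightarrow> y < N \<longrightarrow> x \<noteq> y \<longrightarrow> c x y = c y x \<and> c x y \<in> {1..k})"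

definition has_mono_copy :: "nat \<Rightarrow> (nat \<Rightarrow> nat \<Rightarrow> nat) \<Rightarrow> nat \<Rightarrow> graph \<Rightarrow> bool" where
  "has_mono_copy N c col G \<longleftrightarrow>
     (\<exists>\<phi>. inj_on \<phi> (fst G) \<and> \<phi> ` fst G \<subseteq> {..<N} \<and>
          (\<forall>x y. {x, y} \<in> snd G \<longrightarrow> c (\<phi> x) (\<phi> y) = col))"

text \<open>Ramsey number R(G_1,...,G_k), graphs given as a list (G_i = Gs ! (i-1)).\<close>
definition ramsey_number :: "graph list \<Rightarrow> nat" where
  "ramsey_number Gs = (LEAST N. \<forall>c. is_colouring N (length Gs) c \<longrightarrow>
       (\<exists>i < length Gs. has_mono_copy N c (i + 1) (Gs ! i)))"

fun f_seq :: "nat \<Rightarrow> nat \<Rightarrow> nat \<Rightarrow> nat" where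
  "f_seq 0 m1 m2 = 0"
| "f_seq (Suc 0) m1 m2 = 33 * m1 + 49 * m2"
| "f_seq (Suc (Suc t)) m1 m2 =
     f_seq (Suc t) (f_seq (Suc t) (32 * m1 + 49 * m2) (m1 + m2 - 1)) (32 * m1 + 49 * m2)"

end

theory Submission
  imports Defs
begin

text \<open>
  Induction on the number \<open>t\<close> of cycle colours, along the recursion defining \<open>f\<^sub>t\<close>. For \<open>t \<ge> 2\<close>,
  a colouring without the cycles yields disjoint sets of sizes \<open>f\<^sub>t\<^sub>-\<^sub>1(a, b)\<close> and
  \<open>a = 32 m\<^sub>1 + 49 m\<^sub>2\<close> between which the first \<open>t - 1\<close> colours do not occur, and inside the first
  one a second such pair of sizes \<open>a\<close> and \<open>b = m\<^sub>1 + m\<^sub>2 - 1\<close>. This gives three sets \<open>P, Q, R\<close> of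
  sizes \<open>b, a, a\<close> all of whose cross edges have colour \<open>t\<close> or the last colour (for \<open>t = 1\<close> any
  three disjoint sets do). Let \<open>E\<close> be the graph of colour \<open>t\<close> on these edges; it is bipartite on
  \<open>Q \<union> R\<close>. If one of the pairs \<open>(Q, R), (R, Q), (P, Q), (R, P)\<close> contains an \<open>E\<close>-free pair of sets
  of sizes \<open>m\<^sub>1, m\<^sub>2\<close>, it spans a \<open>K(m\<^sub>1, m\<^sub>2)\<close> in the last colour. Otherwise depth-first search
  gives a path with about \<open>4 m\<^sub>1 + m\<^sub>2\<close> vertices, and deleting a largest small non-expanding set
  gives expanding pieces, in which balls double, so that spheres with \<open>m\<^sub>2\<close> vertices appear within
  radius \<open>log m\<^sub>2\<close>. A common neighbour of two such pieces, together with a segment of the long path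
  joining the two spheres, closes a cycle of any length \<open>n\<close> with \<open>2 \<lceil>log f\<^sub>t\<rceil> + 2 \<le> n \<le> m\<^sub>2\<close>;
  the parity of \<open>n\<close> decides whether the common neighbour is taken in \<open>P\<close> or in \<open>Q\<close>.
\<close>

lemma card_disjoint_split:
  assumes "finite S" "S \<subseteq> A \<union> B" "A \<inter> B = {}"
  shows "card S = card (S \<inter> A) + card (S \<inter> B)"
proof -
  have "S - A = S \<inter> B" using assms(2,3) by blast
  thus ?thesis using card_Int_Diff[OF assms(1), of A] by simp
qed

lemma card_le_card_Int_sum3:
  assumes "finite B" "B \<subseteq> X \<union> Y \<union> Z"
  shows "card B \<le> card (X \<inter> B) + card (Y \<inter> B) + card (Z \<inter> B)"
proof -
  have "B = (X \<inter> B) \<union> (Y \<inter> B) \<union> (Z \<inter> B)" using assms by auto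
  hence "card B \<le> card ((X \<inter> B) \<union> (Y \<inter> B)) + card (Z \<inter> B)"
    by (metis card_Un_le)
  also have "\<dots> \<le> card (X \<inter> B) + card (Y \<inter> B) + card (Z \<inter> B)"
    using card_Un_le by (metis add_le_mono1)
  finally show ?thesis .
qed

lemma obtain_subset_with_card_Diff:
  assumes "finite A" "k \<le> card A"
  obtains X where "X \<subseteq> A" "card X = k" "card (A - X) = card A - k"
  using obtain_subset_with_card_n[OF assms(2)] assms(1) by (metis card_Diff_subset)

lemma obtain_three_disjoint_subsets:
  assumes "finite A" "a + b + c \<le> card A"
  obtains X Y Z where "X \<subseteq> A" "Y \<subseteq> A" "Z \<subseteq> A" "X \<inter> Y = {}" "X \<inter> Z = {}" "Y \<inter> Z = {}"
    "card X = a" "card Y = b" "card Z = c"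
proof -
  have "a \<le> card A" using assms(2) by linarith
  then obtain X where X: "X \<subseteq> A" "card X = a" "card (A - X) = card A - a"
    using obtain_subset_with_card_Diff[OF assms(1)] by blast
  have "b \<le> card (A - X)" using assms(2) X(3) by linarith
  then obtain Y where Y: "Y \<subseteq> A - X" "card Y = b" "card (A - X - Y) = card (A - X) - b"
    using obtain_subset_with_card_Diff[of "A - X"] assms(1) by blast
  have "c \<le> card (A - X - Y)" using assms(2) X(3) Y(3) by linarith
  then obtain Z where Z: "Z \<subseteq> A - X - Y" "card Z = c" by (meson obtain_subset_with_card_n)
  show thesis by (rule that[of X Y Z]) (use X Y Z in auto)
qed

lemma exists_in_both_if_few_fail:
  assumes "finite P" "m1 + m2 - 1 \<le> card P" "card {p\<in>P. \<not> f p} < m1" "card {p\<in>P. \<not> g p} < m2"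
  shows "\<exists>p\<in>P. f p \<and> g p"
proof (rule ccontr)
  assume "\<not> ?thesis"
  hence "P \<subseteq> {p\<in>P. \<not> f p} \<union> {p\<in>P. \<not> g p}" by blast
  hence "card P \<le> card ({p\<in>P. \<not> f p} \<union> {p\<in>P. \<not> g p})"
    using assms(1) by (simp add: card_mono)
  also have "\<dots> \<le> card {p\<in>P. \<not> f p} + card {p\<in>P. \<not> g p}" by (rule card_Un_le)
  finally show False using assms(2-4) by linarith
qed

subsection \<open>Hole-free pairs of vertex sets\<close>

definition hole_free :: "('a \<Rightarrow> 'a \<Rightarrow> bool) \<Rightarrow> nat \<Rightarrow> nat \<Rightarrow> 'a set \<Rightarrow> 'a set \<Rightarrow> bool" where
  "hole_free E m1 m2 A B \<longleftrightarrow>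
     (\<forall>X Y. X \<subseteq> A \<longrightarrow> Y \<subseteq> B \<longrightarrow> finite X \<longrightarrow> finite Y \<longrightarrow> m1 \<le> card X \<longrightarrow> m2 \<le> card Y \<longrightarrow>
        (\<exists>x\<in>X. \<exists>y\<in>Y. E x y))"

lemma hole_freeD:
  "hole_free E m1 m2 A B \<Longrightarrow> X \<subseteq> A \<Longrightarrow> Y \<subseteq> B \<Longrightarrow> finite X \<Longrightarrow> finite Y \<Longrightarrow>
     m1 \<le> card X \<Longrightarrow> m2 \<le> card Y \<Longrightarrow> \<exists>x\<in>X. \<exists>y\<in>Y. E x y"
  unfolding hole_free_def by blast

lemma hole_free_subset: "hole_free E m1 m2 A B \<Longrightarrow> A' \<subseteq> A \<Longrightarrow> B' \<subseteq> B \<Longrightarrow> hole_free E m1 m2 A' B'"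
  unfolding hole_free_def by (meson subset_trans)

lemma obtain_hole_if_not_hole_free:
  assumes "\<not> hole_free E m1 m2 A B"
  obtains X Y where "X \<subseteq> A" "Y \<subseteq> B" "card X = m1" "card Y = m2" "finite X" "finite Y"
    "\<forall>x\<in>X. \<forall>y\<in>Y. \<not> E x y"
proof -
  obtain X Y where XY: "X \<subseteq> A" "Y \<subseteq> B" "finite X" "finite Y" "m1 \<le> card X" "m2 \<le> card Y"
    "\<forall>x\<in>X. \<forall>y\<in>Y. \<not> E x y"
    using assms unfolding hole_free_def by blast
  obtain X' where X': "X' \<subseteq> X" "card X' = m1" "finite X'" using obtain_subset_with_card_n[OF XY(5)] by blast
  obtain Y' where Y': "Y' \<subseteq> Y" "card Y' = m2" "finite Y'" using obtain_subset_with_card_n[OF XY(6)] by blast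
  show thesis by (rule that[of X' Y']) (use X' Y' XY in blast)+
qed

lemma hole_free_card_nonadjacent_left:
  assumes "hole_free E m1 m2 A B" "S \<subseteq> A" "finite S" "Z \<subseteq> B" "finite Z" "m2 \<le> card Z"
    "\<forall>s\<in>S. \<forall>z\<in>Z. \<not> E s z"
  shows "card S < m1"
  using hole_freeD[OF assms(1,2,4,3,5) _ assms(6)] assms(7) by force

lemma hole_free_card_nonadjacent_right:
  assumes "hole_free E m1 m2 A B" "S \<subseteq> B" "finite S" "Z \<subseteq> A" "finite Z" "m1 \<le> card Z"
    "\<forall>z\<in>Z. \<forall>s\<in>S. \<not> E z s"
  shows "card S < m2"
  using hole_freeD[OF assms(1,4,2,5,3) assms(6)] assms(7) by force

subsection \<open>Long paths by depth-first search\<close>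

text \<open>A stage of depth-first search on \<open>W\<close>: \<open>S\<close> holds the finished vertices, the stack \<open>U\<close> is a
  path, \<open>T\<close> holds the unvisited vertices, and no edge joins \<open>S\<close> to \<open>T\<close>.\<close>

definition dfs_state :: "('a \<Rightarrow> 'a \<Rightarrow> bool) \<Rightarrow> 'a set \<Rightarrow> 'a set \<Rightarrow> 'a list \<Rightarrow> 'a set \<Rightarrow> bool" where
  "dfs_state E W S U T \<longleftrightarrow> S \<union> set U \<union> T = W \<and> S \<inter> set U = {} \<and> S \<inter> T = {} \<and> set U \<inter> T = {}
     \<and> distinct U \<and> successively E U \<and> (\<forall>s\<in>S. \<forall>t\<in>T. \<not> E s t)"

lemma dfs_state_with_card_finished:
  assumes "finite W" "dfs_state E W S U T" "card S \<le> k" "k \<le> card W"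
  shows "\<exists>S' U' T'. dfs_state E W S' U' T' \<and> card S' = k"
  using assms(2-4)
proof (induction "2 * card T + length U" arbitrary: S U T rule: less_induct)
  case less
  have fS: "finite S" and fT: "finite T"
    using less.prems(1) assms(1) unfolding dfs_state_def by (metis finite_Un)+
  show ?case
  proof (cases "card S = k")
    case True
    then show ?thesis using less.prems by blast
  next
    case False
    hence "S \<noteq> W" using less.prems by auto
    hence ne: "set U \<union> T \<noteq> {}" using less.prems(1) unfolding dfs_state_def by auto
    have push: "\<exists>S' U' T'. dfs_state E W S' U' T' \<and> card S' = k"
      if "dfs_state E W S (U @ [t]) (T - {t})" "t \<in> T" for t
    proof (rule less.hyps[OF _ that(1) less.prems(2,3)])
      have "card T > 0" using that(2) fT card_gt_0_iff by blast
      thus "2 * card (T - {t}) + length (U @ [t]) < 2 * card T + length U"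
        using that(2) fT by (simp add: card_Diff_singleton)
    qed
    show ?thesis
    proof (cases U rule: rev_cases)
      case Nil
      then obtain t where t: "t \<in> T" using ne by auto
      hence "dfs_state E W S [t] (T - {t})" using less.prems(1) Nil unfolding dfs_state_def by auto
      thus ?thesis using push[OF _ t] Nil by simp
    next
      case (snoc V x)
      show ?thesis
      proof (cases "\<exists>t\<in>T. E x t")
        case True
        then obtain t where t: "t \<in> T" "E x t" by blast
        hence "dfs_state E W S (U @ [t]) (T - {t})" using less.prems(1) snoc unfolding dfs_state_def
          by (auto simp: successively_append_iff)
        thus ?thesis using push[OF _ t(1)] by simp
      next
        case False
        have "dfs_state E W (insert x S) V T"
          using less.prems(1) False unfolding dfs_state_def snoc
          by (auto simp: successively_append_iff)
        moreover have "card (insert x S) \<le> k"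
          using False less.prems(1,2) \<open>card S \<noteq> k\<close> fS unfolding dfs_state_def snoc by auto
        moreover have "2 * card T + length V < 2 * card T + length U" using snoc by simp
        ultimately show ?thesis using less.hyps less.prems(3) by blast
      qed
    qed
  qed
qed

lemma dfs_state_long_stack:
  assumes fA: "finite A" and fB: "finite B" and AB: "A \<inter> B = {}" and sym: "symp E"
    and hf: "hole_free E m1 m2 B A" and m1: "m1 \<ge> 1" and m2: "m2 \<ge> 1"
    and st: "dfs_state E (A \<union> B) S U T" and S: "m2 \<le> card (S \<inter> A)" "card S = 2 * m2 - 1"
  shows "card B + 2 \<le> length U + m1 + m2"
proof -
  have SW: "S \<subseteq> A \<union> B" and TW: "T \<subseteq> A \<union> B"
    using st unfolding dfs_state_def by auto
  have fS: "finite S" and fT: "finite T" using SW TW fA fB finite_subset by blast+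
  have noe: "\<forall>s\<in>S. \<forall>t\<in>T. \<not> E s t" using st unfolding dfs_state_def by auto
  have "card (S \<inter> B) \<le> m2 - 1" using card_disjoint_split[OF fS SW AB] S by linarith
  moreover have "card (T \<inter> B) < m1"
  proof (rule hole_free_card_nonadjacent_left[OF hf _ _ _ _ S(1)])
    show "\<forall>s\<in>T \<inter> B. \<forall>z\<in>S \<inter> A. \<not> E s z" using noe sym by (meson IntD1 sympD)
  qed (use fS fT in auto)
  moreover have "card (set U \<inter> B) \<le> length U"
    by (metis card_length card_mono finite_set inf_le1 le_trans)
  moreover have "B \<subseteq> S \<union> set U \<union> T" using st unfolding dfs_state_def by auto
  hence "card B \<le> card (S \<inter> B) + card (set U \<inter> B) + card (T \<inter> B)"
    using card_le_card_Int_sum3[OF fB] by blast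
  ultimately show ?thesis using m1 m2 by linarith
qed

text \<open>Run the search until \<open>2 m\<^sub>2 - 1\<close> vertices are finished; at least \<open>m\<^sub>2\<close> of them lie on one
  side, so fewer than \<open>m\<^sub>1\<close> unvisited vertices remain on the other side, and the stack is long.\<close>

lemma hole_free_long_path:
  assumes fA: "finite A" and fB: "finite B" and AB: "A \<inter> B = {}" and sym: "symp E"
    and hf: "hole_free E m1 m2 B A" "hole_free E m1 m2 A B" and m1: "m1 \<ge> 1" and m2: "m2 \<ge> 1"
    and A: "2 * m2 \<le> card A"
  obtains U where "distinct U" "set U \<subseteq> A \<union> B" "successively E U"
    "min (card A) (card B) + 2 \<le> length U + m1 + m2"
proof -
  have fW: "finite (A \<union> B)" using fA fB by simp
  have init: "dfs_state E (A \<union> B) {} [] (A \<union> B)" unfolding dfs_state_def by auto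
  have "2 * m2 - 1 \<le> card (A \<union> B)" using A card_mono[OF fW, of A] by auto
  hence "\<exists>S U T. dfs_state E (A \<union> B) S U T \<and> card S = 2 * m2 - 1"
    using dfs_state_with_card_finished[OF fW init] by simp
  then obtain S U T where st: "dfs_state E (A \<union> B) S U T" and S: "card S = 2 * m2 - 1" by blast
  have SW: "S \<subseteq> A \<union> B" using st unfolding dfs_state_def by auto
  have "card S = card (S \<inter> A) + card (S \<inter> B)"
    using card_disjoint_split[OF _ SW AB] SW fW finite_subset by blast
  hence "m2 \<le> card (S \<inter> A) \<or> m2 \<le> card (S \<inter> B)" using S m2 by linarith
  hence "card B + 2 \<le> length U + m1 + m2 \<or> card A + 2 \<le> length U + m1 + m2"
  proof
    assume "m2 \<le> card (S \<inter> A)"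
    thus ?thesis using dfs_state_long_stack[OF fA fB AB sym hf(1) m1 m2 st] S by blast
  next
    assume "m2 \<le> card (S \<inter> B)"
    moreover have "dfs_state E (B \<union> A) S U T" using st by (simp add: Un_commute)
    ultimately show ?thesis using dfs_state_long_stack[OF fB fA _ sym hf(2) m1 m2] S AB
      by (simp add: Int_commute)
  qed
  hence "min (card A) (card B) + 2 \<le> length U + m1 + m2" by linarith
  moreover have "distinct U" "set U \<subseteq> A \<union> B" "successively E U" using st unfolding dfs_state_def by auto
  ultimately show thesis using that by blast
qed

subsection \<open>Expansion\<close>

definition ext_nbhd :: "('a \<Rightarrow> 'a \<Rightarrow> bool) \<Rightarrow> 'a set \<Rightarrow> 'a set \<Rightarrow> 'a set" where
  "ext_nbhd E Y S = {v \<in> Y - S. \<exists>u\<in>S. E u v}"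

definition expanding :: "('a \<Rightarrow> 'a \<Rightarrow> bool) \<Rightarrow> nat \<Rightarrow> 'a set \<Rightarrow> bool" where
  "expanding E k Y \<longleftrightarrow> (\<forall>S. S \<subseteq> Y \<longrightarrow> S \<noteq> {} \<longrightarrow> card S < k \<longrightarrow> card S < card (ext_nbhd E Y S))"

lemma expandingD:
  "expanding E k Y \<Longrightarrow> S \<subseteq> Y \<Longrightarrow> S \<noteq> {} \<Longrightarrow> card S < k \<Longrightarrow> card S < card (ext_nbhd E Y S)"
  unfolding expanding_def by blast

lemma ext_nbhd_subset: "ext_nbhd E Y S \<subseteq> Y"
  unfolding ext_nbhd_def by auto

lemma ext_nbhd_Un_subset:
  "B \<subseteq> Y \<Longrightarrow> S \<subseteq> Y - B \<Longrightarrow> ext_nbhd E Y (B \<union> S) \<subseteq> ext_nbhd E Y B \<union> ext_nbhd E (Y - B) S"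
  unfolding ext_nbhd_def by auto

lemma card_ext_nbhd_Un_le:
  assumes fY: "finite Y" and B: "B \<subseteq> Y" "card (ext_nbhd E Y B) \<le> card B"
    and S: "S \<subseteq> Y - B" "card (ext_nbhd E (Y - B) S) \<le> card S"
  shows "card (ext_nbhd E Y (B \<union> S)) \<le> card (B \<union> S)"
proof -
  have "finite (ext_nbhd E Y B \<union> ext_nbhd E (Y - B) S)"
    using ext_nbhd_subset[of E Y B] ext_nbhd_subset[of E "Y - B" S] fY
    by (meson finite_Diff finite_UnI finite_subset)
  hence "card (ext_nbhd E Y (B \<union> S)) \<le> card (ext_nbhd E Y B \<union> ext_nbhd E (Y - B) S)"
    by (rule card_mono) (rule ext_nbhd_Un_subset[OF B(1) S(1)])
  also have "\<dots> \<le> card (ext_nbhd E Y B) + card (ext_nbhd E (Y - B) S)" by (rule card_Un_le)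
  also have "\<dots> \<le> card B + card S" using B(2) S(2) by linarith
  also have "\<dots> = card (B \<union> S)"
    using S(1) fY B(1) finite_subset by (subst card_Un_disjoint) (auto intro: finite_subset)
  finally show ?thesis .
qed

lemma hole_free_side_set_expands:
  assumes fA: "finite A" and fB: "finite B" and sym: "symp E"
    and hf: "hole_free E m1 m2 B A" and B: "m1 + 2 * card T \<le> card B"
    and T: "T \<subseteq> A \<union> B" "m2 \<le> card (T \<inter> A)"
  shows "card T < card (ext_nbhd E (A \<union> B) T)"
proof (rule ccontr)
  assume "\<not> ?thesis"
  hence nT: "card (ext_nbhd E (A \<union> B) T) \<le> card T" by simp
  have fF: "finite (A \<union> B)" using fA fB by simp
  have fT: "finite T" using T(1) fF finite_subset by blast
  have fN: "finite (ext_nbhd E (A \<union> B) T)" using finite_subset[OF ext_nbhd_subset fF] .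
  define Z where "Z = B - T - ext_nbhd E (A \<union> B) T"
  have "B \<subseteq> Z \<union> T \<union> ext_nbhd E (A \<union> B) T" unfolding Z_def by blast
  hence "card B \<le> card (Z \<union> T \<union> ext_nbhd E (A \<union> B) T)"
    using fT fB fN by (intro card_mono) (auto simp: Z_def)
  also have "\<dots> \<le> card Z + card T + card (ext_nbhd E (A \<union> B) T)"
    using card_Un_le[of "Z \<union> T" "ext_nbhd E (A \<union> B) T"] card_Un_le[of Z T] by linarith
  finally have "m1 \<le> card Z" using nT B by linarith
  then obtain x y where xy: "x \<in> Z" "y \<in> T \<inter> A" "E x y"
    using hole_freeD[OF hf, of Z "T \<inter> A"] fB fT T(2) unfolding Z_def by auto
  hence "x \<in> ext_nbhd E (A \<union> B) T" using sym unfolding Z_def ext_nbhd_def by (auto dest: sympD)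
  thus False using xy(1) unfolding Z_def by auto
qed

lemma hole_free_medium_set_expands:
  assumes fA: "finite A" and fB: "finite B" and AB: "A \<inter> B = {}" and sym: "symp E"
    and hf: "hole_free E m1 m2 B A" "hole_free E m1 m2 A B"
    and A: "m1 + 8 * m2 \<le> card A" and B: "m1 + 8 * m2 \<le> card B"
    and T: "T \<subseteq> A \<union> B" "2 * m2 \<le> card T" "card T \<le> 4 * m2"
  shows "card T < card (ext_nbhd E (A \<union> B) T)"
proof -
  have "card T = card (T \<inter> A) + card (T \<inter> B)"
    using card_disjoint_split[OF _ T(1) AB] T(1) fA fB finite_subset by blast
  hence "m2 \<le> card (T \<inter> A) \<or> m2 \<le> card (T \<inter> B)" using T(2) by linarith
  thus ?thesis
  proof
    assume "m2 \<le> card (T \<inter> A)"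
    moreover have "m1 + 2 * card T \<le> card B" using B T(3) by linarith
    ultimately show ?thesis using hole_free_side_set_expands[OF fA fB sym hf(1) _ T(1)] by blast
  next
    assume TB: "m2 \<le> card (T \<inter> B)"
    have "T \<subseteq> B \<union> A" using T(1) by blast
    moreover have "m1 + 2 * card T \<le> card A" using A T(3) by linarith
    ultimately show ?thesis using hole_free_side_set_expands[OF fB fA sym hf(2) _ _ TB]
      by (simp add: Un_commute)
  qed
qed

text \<open>Remove a largest non-expanding set \<open>B\<^sub>0\<close> of fewer than \<open>2 m\<^sub>2\<close> vertices. A further
  non-expanding set \<open>S\<close> would make \<open>B\<^sub>0 \<union> S\<close> non-expanding, hence (by maximality) of size at least
  \<open>2 m\<^sub>2\<close> but below \<open>4 m\<^sub>2\<close>, which medium sets cannot be.\<close>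

lemma hole_free_obtain_expanding_subset:
  assumes fA: "finite A" and fB: "finite B" and AB: "A \<inter> B = {}" and sym: "symp E"
    and hf: "hole_free E m1 m2 B A" "hole_free E m1 m2 A B"
    and A: "m1 + 8 * m2 \<le> card A" and B: "m1 + 8 * m2 \<le> card B" and m2: "m2 \<ge> 1"
  obtains Y where "Y \<subseteq> A \<union> B" "expanding E (2 * m2) Y"
    "m1 + 6 * m2 \<le> card (A \<inter> Y)" "m1 + 6 * m2 \<le> card (B \<inter> Y)"
proof -
  let ?F = "A \<union> B"
  have fF: "finite ?F" using fA fB by simp
  define C where "C = {S. S \<subseteq> ?F \<and> card S < 2 * m2 \<and> card (ext_nbhd E ?F S) \<le> card S}"
  have "{} \<in> C" unfolding C_def ext_nbhd_def using m2 by auto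
  have "\<exists>B0. B0 \<in> C \<and> (\<forall>S. S \<in> C \<longrightarrow> card S \<le> card B0)"
    by (rule Lattices_Big.ex_has_greatest_nat[of _ "{}" _ "2 * m2"]) (use \<open>{} \<in> C\<close> in \<open>auto simp: C_def\<close>)
  then obtain B0 where B0: "B0 \<in> C" and max: "\<And>S. S \<in> C \<Longrightarrow> card S \<le> card B0" by blast
  have B0F: "B0 \<subseteq> ?F" and cB0: "card B0 < 2 * m2" and nB0: "card (ext_nbhd E ?F B0) \<le> card B0"
    using B0 unfolding C_def by auto
  have fB0: "finite B0" using B0F fF finite_subset by blast
  have "expanding E (2 * m2) (?F - B0)"
    unfolding expanding_def
  proof (intro allI impI, rule ccontr)
    fix S assume S: "S \<subseteq> ?F - B0" "S \<noteq> {}" "card S < 2 * m2"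
      and "\<not> card S < card (ext_nbhd E (?F - B0) S)"
    hence nS: "card (ext_nbhd E (?F - B0) S) \<le> card S" by simp
    have fS: "finite S" using S(1) fF finite_subset by blast
    have cT: "card (B0 \<union> S) = card B0 + card S" using S(1) fB0 fS by (subst card_Un_disjoint) auto
    have nT: "card (ext_nbhd E ?F (B0 \<union> S)) \<le> card (B0 \<union> S)"
      by (rule card_ext_nbhd_Un_le[OF fF B0F nB0 S(1) nS])
    have TF: "B0 \<union> S \<subseteq> ?F" using B0F S(1) by auto
    have "card S > 0" using fS S(2) by (simp add: card_gt_0_iff)
    show False
    proof (cases "card (B0 \<union> S) < 2 * m2")
      case True
      hence "B0 \<union> S \<in> C" using TF nT unfolding C_def by auto
      hence "card (B0 \<union> S) \<le> card B0" by (rule max)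
      thus False using cT \<open>card S > 0\<close> by linarith
    next
      case False
      thus False using hole_free_medium_set_expands[OF fA fB AB sym hf A B TF] nT cT cB0 S(3) by linarith
    qed
  qed
  moreover have "A \<inter> (?F - B0) = A - B0" "B \<inter> (?F - B0) = B - B0" by auto
  moreover have "card A - card B0 \<le> card (A - B0)" "card B - card B0 \<le> card (B - B0)"
    using diff_card_le_card_Diff[OF fB0] by blast+
  ultimately show thesis using that[of "?F - B0"] A B cB0 by auto
qed

definition is_path :: "('a \<Rightarrow> 'a \<Rightarrow> bool) \<Rightarrow> 'a set \<Rightarrow> 'a \<Rightarrow> 'a \<Rightarrow> 'a list \<Rightarrow> bool" where
  "is_path E Y x u ps \<longleftrightarrow>
     ps \<noteq> [] \<and> hd ps = x \<and> last ps = u \<and> distinct ps \<and> set ps \<subseteq> Y \<and> successively E ps"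

definition path_ball :: "('a \<Rightarrow> 'a \<Rightarrow> bool) \<Rightarrow> 'a set \<Rightarrow> 'a \<Rightarrow> nat \<Rightarrow> 'a set" where
  "path_ball E Y x k = {u. \<exists>ps. is_path E Y x u ps \<and> length ps \<le> Suc k}"

lemma successively_take: "successively P xs \<Longrightarrow> successively P (take n xs)"
  unfolding successively_conv_nth by auto

lemma successively_drop: "successively P xs \<Longrightarrow> successively P (drop n xs)"
  unfolding successively_conv_nth by (auto simp: add.commute)

lemma is_path_prefix:
  assumes "is_path E Y x u ps" "v \<in> set ps"
  obtains qs where "is_path E Y x v qs" "length qs \<le> length ps"
proof -
  obtain i where i: "i < length ps" "ps ! i = v" using assms(2) by (metis in_set_conv_nth)
  let ?qs = "take (Suc i) ps"
  have "?qs \<noteq> []" "hd ?qs = x" using i assms(1) unfolding is_path_def by (cases ps; auto)+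
  moreover have "last ?qs = v" using i by (simp add: take_Suc_conv_app_nth)
  ultimately have "is_path E Y x v ?qs"
    using assms(1) unfolding is_path_def by (auto simp: successively_take dest: in_set_takeD)
  thus thesis using that by simp
qed

lemma path_ball_subset: "path_ball E Y x k \<subseteq> Y"
  unfolding path_ball_def is_path_def by (auto intro: last_in_set)

lemma finite_path_ball: "finite Y \<Longrightarrow> finite (path_ball E Y x k)"
  by (rule finite_subset[OF path_ball_subset])

lemma center_in_path_ball: "x \<in> Y \<Longrightarrow> x \<in> path_ball E Y x k"
  unfolding path_ball_def is_path_def by (auto intro!: exI[of _ "[x]"])

lemma path_ball_0:
  assumes "x \<in> Y"
  shows "path_ball E Y x 0 = {x}"
proof
  show "path_ball E Y x 0 \<subseteq> {x}"
  proof
    fix u assume "u \<in> path_ball E Y x 0"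
    then obtain ps where "is_path E Y x u ps" "length ps \<le> 1" unfolding path_ball_def by auto
    thus "u \<in> {x}" unfolding is_path_def by (cases ps) auto
  qed
  show "{x} \<subseteq> path_ball E Y x 0" using center_in_path_ball[OF assms] by simp
qed

lemma path_ball_mono: "path_ball E Y x k \<subseteq> path_ball E Y x (Suc k)"
  unfolding path_ball_def by fastforce

lemma ext_nbhd_path_ball: "ext_nbhd E Y (path_ball E Y x k) \<subseteq> path_ball E Y x (Suc k)"
proof
  fix v assume "v \<in> ext_nbhd E Y (path_ball E Y x k)"
  then obtain u where v: "v \<in> Y" "v \<notin> path_ball E Y x k" "u \<in> path_ball E Y x k" "E u v"
    unfolding ext_nbhd_def by auto
  then obtain ps where ps: "is_path E Y x u ps" "length ps \<le> Suc k" unfolding path_ball_def by auto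
  have "v \<notin> set ps"
  proof
    assume "v \<in> set ps"
    then obtain qs where "is_path E Y x v qs" "length qs \<le> length ps" by (rule is_path_prefix[OF ps(1)])
    hence "v \<in> path_ball E Y x k" using ps(2) unfolding path_ball_def by auto
    thus False using v(2) by simp
  qed
  hence "is_path E Y x v (ps @ [v])" using ps(1) v unfolding is_path_def
    by (auto simp: successively_append_iff)
  thus "v \<in> path_ball E Y x (Suc k)" using ps(2) unfolding path_ball_def by (auto intro!: exI[of _ "ps @ [v]"])
qed

lemma card_path_ball_Suc:
  assumes "finite Y"
  shows "card (path_ball E Y x k) + card (ext_nbhd E Y (path_ball E Y x k)) \<le> card (path_ball E Y x (Suc k))"
proof -
  have "card (path_ball E Y x k) + card (ext_nbhd E Y (path_ball E Y x k))
      = card (path_ball E Y x k \<union> ext_nbhd E Y (path_ball E Y x k))"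
    using finite_path_ball[OF assms] finite_subset[OF ext_nbhd_subset assms]
    by (intro card_Un_disjoint[symmetric]) (auto simp: ext_nbhd_def)
  also have "\<dots> \<le> card (path_ball E Y x (Suc k))"
    using path_ball_mono[of E Y x k] ext_nbhd_path_ball[of E Y x k] finite_path_ball[OF assms, of E x "Suc k"]
    by (intro card_mono) blast+
  finally show ?thesis .
qed

lemma expanding_path_ball_doubles:
  assumes fY: "finite Y" and x: "x \<in> Y" and ex: "expanding E k Y"
  shows "card (path_ball E Y x r) < k \<Longrightarrow> 2 ^ Suc r \<le> card (path_ball E Y x r) + 1"
proof (induction r)
  case 0
  thus ?case using path_ball_0[OF x] by simp
next
  case (Suc r)
  have "card (path_ball E Y x r) \<le> card (path_ball E Y x (Suc r))"
    by (rule card_mono[OF finite_path_ball[OF fY] path_ball_mono])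
  hence small: "card (path_ball E Y x r) < k" using Suc.prems by linarith
  have "card (path_ball E Y x r) < card (ext_nbhd E Y (path_ball E Y x r))"
    using expandingD[OF ex path_ball_subset _ small] center_in_path_ball[OF x] by blast
  thus ?case using Suc.IH[OF small] card_path_ball_Suc[OF fY, of E x r] by simp
qed

text \<open>In an expanding set the balls around \<open>x\<close> double until they have \<open>2 m\<^sub>2\<close> vertices, so
  some sphere of radius \<open>j\<close> with \<open>2^j \<le> 2 m\<^sub>2\<close> has at least \<open>m\<^sub>2\<close> vertices.\<close>

lemma expanding_large_sphere:
  assumes fY: "finite Y" and x: "x \<in> Y" and m2: "m2 \<ge> 1" and ex: "expanding E (2 * m2) Y"
  obtains j L where "2 ^ j \<le> 2 * m2" "L \<subseteq> Y" "m2 \<le> card L" "finite L"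
    "\<forall>u\<in>L. \<exists>ps. is_path E Y x u ps \<and> length ps = Suc j"
proof -
  let ?b = "\<lambda>r. card (path_ball E Y x r)"
  have "2 * m2 \<le> ?b (2 * m2)"
  proof (rule ccontr)
    assume small: "\<not> 2 * m2 \<le> ?b (2 * m2)"
    hence "2 ^ Suc (2 * m2) \<le> ?b (2 * m2) + 1" by (intro expanding_path_ball_doubles[OF fY x ex]) simp
    moreover have "2 * m2 < 2 ^ (2 * m2)" by (rule less_exp)
    ultimately show False using small by simp
  qed
  define j where "j = (LEAST r. 2 * m2 \<le> ?b r)"
  have bj: "2 * m2 \<le> ?b j" unfolding j_def by (rule LeastI) fact
  have "j \<noteq> 0"
  proof
    assume "j = 0"
    thus False using bj path_ball_0[OF x] m2 by simp
  qed
  then obtain i where ji: "j = Suc i" using not0_implies_Suc by blast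
  have "i < j" using ji by simp
  hence "\<not> 2 * m2 \<le> ?b i" unfolding j_def by (rule not_less_Least)
  hence bi: "?b i < 2 * m2" by simp
  define L where "L = path_ball E Y x j - path_ball E Y x i"
  have "card L = ?b j - ?b i"
    unfolding L_def ji by (rule card_Diff_subset[OF finite_path_ball[OF fY] path_ball_mono])
  moreover have "?b i < card (ext_nbhd E Y (path_ball E Y x i))"
    using expandingD[OF ex path_ball_subset _ bi] center_in_path_ball[OF x] by blast
  ultimately have cL: "m2 \<le> card L" using card_path_ball_Suc[OF fY, of E x i] bj unfolding ji by linarith
  have "2 ^ j \<le> 2 * m2"
    using expanding_path_ball_doubles[OF fY x ex bi] bi unfolding ji by linarith
  moreover have "L \<subseteq> Y" unfolding L_def using path_ball_subset[of E Y x j] by blast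
  moreover have "finite L" unfolding L_def using finite_path_ball[OF fY, of E x j] by blast
  moreover have "\<forall>u\<in>L. \<exists>ps. is_path E Y x u ps \<and> length ps = Suc j"
  proof
    fix u assume u: "u \<in> L"
    obtain ps where ps: "is_path E Y x u ps" "length ps \<le> Suc j"
      using u unfolding L_def path_ball_def by blast
    have "\<not> length ps \<le> Suc i" using u ps(1) unfolding L_def path_ball_def by blast
    thus "\<exists>ps. is_path E Y x u ps \<and> length ps = Suc j" using ps ji by (intro exI[of _ ps]) simp
  qed
  ultimately show thesis using that cL by blast
qed

definition bipartite_on :: "('a \<Rightarrow> 'a \<Rightarrow> bool) \<Rightarrow> 'a set \<Rightarrow> 'a set \<Rightarrow> bool" where
  "bipartite_on E Q R \<longleftrightarrow> Q \<inter> R = {} \<and> (\<forall>u\<in>Q. \<forall>v\<in>Q. \<not> E u v) \<and> (\<forall>u\<in>R. \<forall>v\<in>R. \<not> E u v)"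

lemma bipartite_on_path_parity:
  assumes "bipartite_on E Q R" "set ps \<subseteq> Q \<union> R" "successively E ps" "i < length ps"
  shows "(ps ! i \<in> Q) \<longleftrightarrow> ((ps ! 0 \<in> Q) \<longleftrightarrow> even i)"
  using assms(4)
proof (induction i)
  case 0
  thus ?case by simp
next
  case (Suc i)
  have "E (ps ! i) (ps ! Suc i)" using successively_nth[OF assms(3) Suc.prems] .
  moreover have "ps ! i \<in> set ps" "ps ! Suc i \<in> set ps" using Suc.prems by simp_all
  hence "ps ! i \<in> Q \<union> R" "ps ! Suc i \<in> Q \<union> R" using assms(2) by blast+
  ultimately have "(ps ! Suc i \<in> Q) \<longleftrightarrow> ps ! i \<notin> Q"
    using assms(1) unfolding bipartite_on_def by blast
  thus ?case using Suc by auto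
qed

lemma bipartite_on_path_end:
  assumes "bipartite_on E Q R" "Y \<subseteq> Q \<union> R" "is_path E Y x u ps" "length ps = Suc j"
  shows "u \<in> Q \<longleftrightarrow> (x \<in> Q \<longleftrightarrow> even j)"
proof -
  have "ps ! j = u" "ps ! 0 = x"
    using assms(3,4) unfolding is_path_def by (metis diff_Suc_1 last_conv_nth, metis hd_conv_nth)
  thus ?thesis
    using bipartite_on_path_parity[OF assms(1), of ps j] assms(2-4) unfolding is_path_def by auto
qed

text \<open>\<open>\<sigma>\<close> records the side of \<open>L\<close>; the vertices counted lie on the other side.\<close>

lemma bipartite_on_hole_free_few_nonadjacent:
  assumes sym: "symp E" and bip: "bipartite_on E Q R"
    and hf: "hole_free E m1 m2 Q R" "hole_free E m1 m2 R Q"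
    and W: "W \<subseteq> Q \<union> R" "finite W"
    and L: "L \<subseteq> Q \<union> R" "finite L" "m2 \<le> card L" "\<forall>u\<in>L. (u \<in> Q) = \<sigma>"
  shows "card {v\<in>W. (v \<in> Q) \<noteq> \<sigma> \<and> (\<forall>u\<in>L. \<not> E u v)} < m1"
proof -
  let ?B = "{v\<in>W. (v \<in> Q) \<noteq> \<sigma> \<and> (\<forall>u\<in>L. \<not> E u v)}"
  have fB: "finite ?B" using W by simp
  have ne: "\<forall>s\<in>?B. \<forall>z\<in>L. \<not> E s z" using sym by (blast dest: sympD)
  show ?thesis
  proof (cases \<sigma>)
    case True
    hence "L \<subseteq> Q" "?B \<subseteq> R" using L W by blast+
    thus ?thesis using hole_free_card_nonadjacent_left[OF hf(2) _ fB _ L(2,3) ne] by blast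
  next
    case False
    hence "L \<subseteq> R" "?B \<subseteq> Q" using L W bip unfolding bipartite_on_def by blast+
    thus ?thesis using hole_free_card_nonadjacent_left[OF hf(1) _ fB _ L(2,3) ne] by blast
  qed
qed

subsection \<open>Closing cycles\<close>

definition is_cycle :: "('a \<Rightarrow> 'a \<Rightarrow> bool) \<Rightarrow> 'a set \<Rightarrow> nat \<Rightarrow> 'a list \<Rightarrow> bool" where
  "is_cycle E V n cyc \<longleftrightarrow>
     length cyc = n \<and> distinct cyc \<and> set cyc \<subseteq> V \<and> successively E cyc \<and> E (last cyc) (hd cyc)"

lemma is_cycle_mono:
  "is_cycle E V n cyc \<Longrightarrow> V \<subseteq> V' \<Longrightarrow> (\<And>u v. E u v \<Longrightarrow> E' u v) \<Longrightarrow> is_cycle E' V' n cyc"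
  unfolding is_cycle_def by (auto intro: successively_mono)

lemma is_cycle_join:
  assumes sym: "symp E"
    and ps1: "is_path E F1 x1 u1 ps1" and ps2: "is_path E F2 x2 u2 ps2"
    and seg: "seg \<noteq> []" "distinct seg" "set seg \<subseteq> W" "successively E seg"
    and edges: "E p x1" "E p x2" "E u1 (hd seg)" "E (last seg) u2"
    and disj: "W \<inter> F1 = {}" "W \<inter> F2 = {}" "F1 \<inter> F2 = {}" "p \<notin> W \<union> F1 \<union> F2"
  shows "is_cycle E (insert p (W \<union> F1 \<union> F2)) (length ps1 + length seg + length ps2 + 1)
           (p # ps1 @ seg @ rev ps2)"
proof -
  have p1: "ps1 \<noteq> []" "hd ps1 = x1" "last ps1 = u1" "distinct ps1" "set ps1 \<subseteq> F1" "successively E ps1"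
    using ps1 unfolding is_path_def by auto
  have p2: "ps2 \<noteq> []" "hd ps2 = x2" "last ps2 = u2" "distinct ps2" "set ps2 \<subseteq> F2" "successively E ps2"
    using ps2 unfolding is_path_def by auto
  have "successively E (rev ps2)"
    using p2(6) sym by (auto intro: successively_mono dest: sympD)
  moreover have "E (last seg) (hd (rev ps2))" using edges(4) p2(1,3) by (simp add: hd_rev)
  ultimately have "successively E (ps1 @ seg @ rev ps2)"
    using p1 seg edges(3) p2(1) by (auto simp: successively_append_iff)
  hence "successively E (p # ps1 @ seg @ rev ps2)" using p1(1,2) edges(1) by (simp add: successively_Cons)
  moreover have "E (last (p # ps1 @ seg @ rev ps2)) (hd (p # ps1 @ seg @ rev ps2))"
    using p2(1,2) edges(2) sym by (simp add: last_rev sympD)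
  moreover have "distinct (p # ps1 @ seg @ rev ps2)" using p1 p2 seg disj by auto
  moreover have "set (p # ps1 @ seg @ rev ps2) \<subseteq> insert p (W \<union> F1 \<union> F2)" using p1 p2 seg by auto
  ultimately show ?thesis unfolding is_cycle_def by simp
qed

lemma card_residue_mod_2_ge:
  assumes "r < (2::nat)"
  shows "N div 2 \<le> card {s. s < N \<and> s mod 2 = r}"
proof -
  have "(\<lambda>k. 2 * k + r) ` {..<N div 2} \<subseteq> {s. s < N \<and> s mod 2 = r}"
  proof
    fix x assume "x \<in> (\<lambda>k. 2 * k + r) ` {..<N div 2}"
    then obtain k where k: "k < N div 2" "x = 2 * k + r" by auto
    have "2 * (N div 2) \<le> N" by simp
    thus "x \<in> {s. s < N \<and> s mod 2 = r}" using k assms by auto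
  qed
  hence "card ((\<lambda>k. 2 * k + r) ` {..<N div 2}) \<le> card {s. s < N \<and> s mod 2 = r}"
    by (intro card_mono) simp_all
  moreover have "inj_on (\<lambda>k. 2 * k + r) {..<N div 2}" by (auto simp: inj_on_def)
  ultimately show ?thesis by (simp add: card_image)
qed

text \<open>Fewer than \<open>2 m\<^sub>1\<close> of the at least \<open>2 m\<^sub>1\<close> indices below \<open>N\<close> with a prescribed parity are
  blocked.\<close>

lemma exists_index_avoiding:
  assumes d: "distinct U" and len: "N + c \<le> length U" and N: "4 * m1 \<le> N" and r: "r < (2::nat)"
    and B: "finite B1" "card B1 < m1" "finite B2" "card B2 < m1"
  obtains s where "s < N" "s mod 2 = r" "U ! s \<notin> B1" "U ! (s + c) \<notin> B2"
proof (rule ccontr)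
  assume na: "\<not> thesis"
  let ?I = "{s. s < N \<and> s mod 2 = r}"
  let ?I1 = "{s\<in>?I. U ! s \<in> B1}"
  let ?I2 = "{s\<in>?I. U ! (s + c) \<in> B2}"
  have "?I \<subseteq> ?I1 \<union> ?I2" using na that by blast
  hence "card ?I \<le> card (?I1 \<union> ?I2)" by (simp add: card_mono)
  also have "\<dots> \<le> card ?I1 + card ?I2" by (rule card_Un_le)
  also have "card ?I1 \<le> card B1"
    using d len B(1) by (intro card_inj_on_le[of "\<lambda>s. U ! s"]) (auto simp: inj_on_def nth_eq_iff_index_eq)
  also have "card ?I2 \<le> card B2"
    using d len B(3) by (intro card_inj_on_le[of "\<lambda>s. U ! (s + c)"]) (auto simp: inj_on_def nth_eq_iff_index_eq)
  finally have "card ?I < 2 * m1" using B by linarith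
  thus False using card_residue_mod_2_ge[OF r, of N] N by linarith
qed

lemma take_drop_segment:
  assumes "s + c < length U"
  defines "seg \<equiv> take (Suc c) (drop s U)"
  shows "seg \<noteq> []" "hd seg = U ! s" "last seg = U ! (s + c)" "length seg = Suc c" "set seg \<subseteq> set U"
proof -
  have d: "drop s U = U ! s # drop (Suc s) U" using assms by (simp add: Cons_nth_drop_Suc)
  show "seg \<noteq> []" "hd seg = U ! s" unfolding seg_def using d by simp_all
  show l: "length seg = Suc c" unfolding seg_def using assms by simp
  show "last seg = U ! (s + c)" using assms l unfolding seg_def by (simp add: last_conv_nth)
  show "set seg \<subseteq> set U" unfolding seg_def by (meson in_set_dropD in_set_takeD subsetI)
qed

text \<open>The start \<open>s\<close> gets the parity that puts \<open>U ! s\<close> on the side opposite to \<open>L\<^sub>1\<close>; the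
  parity of \<open>c\<close> then puts \<open>U ! (s + c)\<close> opposite to \<open>L\<^sub>2\<close>.\<close>

lemma bipartite_on_segment_ends_adjacent:
  assumes sym: "symp E" and bip: "bipartite_on E Q R"
    and hf: "hole_free E m1 m2 Q R" "hole_free E m1 m2 R Q"
    and W: "W \<subseteq> Q \<union> R" "finite W"
    and U: "distinct U" "set U \<subseteq> W" "successively E U" "4 * m1 + c \<le> length U"
    and L1: "L1 \<subseteq> Q \<union> R" "finite L1" "m2 \<le> card L1" "\<forall>u\<in>L1. (u \<in> Q) = \<sigma>1"
    and L2: "L2 \<subseteq> Q \<union> R" "finite L2" "m2 \<le> card L2" "\<forall>u\<in>L2. (u \<in> Q) = \<sigma>2"
    and c: "even c \<longleftrightarrow> (\<sigma>1 \<longleftrightarrow> \<sigma>2)"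
  obtains s where "s + c < length U" "\<exists>u\<in>L1. E u (U ! s)" "\<exists>u\<in>L2. E u (U ! (s + c))"
proof -
  define B1 where "B1 = {v\<in>W. (v \<in> Q) \<noteq> \<sigma>1 \<and> (\<forall>u\<in>L1. \<not> E u v)}"
  define B2 where "B2 = {v\<in>W. (v \<in> Q) \<noteq> \<sigma>2 \<and> (\<forall>u\<in>L2. \<not> E u v)}"
  have B: "finite B1" "card B1 < m1" "finite B2" "card B2 < m1"
    using W(2) bipartite_on_hole_free_few_nonadjacent[OF sym bip hf W L1]
      bipartite_on_hole_free_few_nonadjacent[OF sym bip hf W L2] unfolding B1_def B2_def by auto
  define N where "N = length U - c"
  have N: "4 * m1 \<le> N" "N + c \<le> length U" using U(4) unfolding N_def by auto
  define r :: nat where "r = (if (U ! 0 \<in> Q) \<longleftrightarrow> \<sigma>1 then 1 else 0)"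
  have "r < 2" unfolding r_def by simp
  then obtain s where s: "s < N" "s mod 2 = r" "U ! s \<notin> B1" "U ! (s + c) \<notin> B2"
    using exists_index_avoiding[OF U(1) N(2,1) _ B] by blast
  have sc: "s + c < length U" using s N by linarith
  have UQR: "set U \<subseteq> Q \<union> R" using U(2) W(1) by blast
  have par: "(U ! s \<in> Q) \<longleftrightarrow> ((U ! 0 \<in> Q) \<longleftrightarrow> even s)"
    "(U ! (s + c) \<in> Q) \<longleftrightarrow> ((U ! 0 \<in> Q) \<longleftrightarrow> even (s + c))"
    using bipartite_on_path_parity[OF bip UQR U(3)] sc by simp_all
  moreover have "even s \<longleftrightarrow> r = 0" using s(2) by (auto simp: r_def split: if_splits)
  ultimately have sQ: "(U ! s \<in> Q) \<longleftrightarrow> \<not> \<sigma>1" by (auto simp: r_def split: if_splits)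
  hence scQ: "(U ! (s + c) \<in> Q) \<longleftrightarrow> \<not> \<sigma>2" using par c by auto
  have "U ! s \<in> W" "U ! (s + c) \<in> W" using sc U(2) by (auto intro: nth_mem)
  thus thesis using that[OF sc] s(3,4) sQ scQ unfolding B1_def B2_def by blast
qed

lemma bipartite_on_close_cycle:
  assumes sym: "symp E" and bip: "bipartite_on E Q R"
    and hf: "hole_free E m1 m2 Q R" "hole_free E m1 m2 R Q"
    and sub: "W \<subseteq> Q \<union> R" "F1 \<subseteq> Q \<union> R" "F2 \<subseteq> Q \<union> R" and fW: "finite W"
    and disj: "W \<inter> F1 = {}" "W \<inter> F2 = {}" "F1 \<inter> F2 = {}" "p \<notin> W \<union> F1 \<union> F2"
    and U: "distinct U" "set U \<subseteq> W" "successively E U" "4 * m1 + m2 \<le> length U"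
    and x: "E p x1" "E p x2" "((x1 \<in> Q) \<longleftrightarrow> (x2 \<in> Q)) \<longleftrightarrow> even n"
    and L1: "L1 \<subseteq> F1" "finite L1" "m2 \<le> card L1" "\<forall>u\<in>L1. \<exists>ps. is_path E F1 x1 u ps \<and> length ps = Suc j1"
    and L2: "L2 \<subseteq> F2" "finite L2" "m2 \<le> card L2" "\<forall>u\<in>L2. \<exists>ps. is_path E F2 x2 u ps \<and> length ps = Suc j2"
    and n: "j1 + j2 + 4 \<le> n" "n \<le> m2"
  shows "\<exists>cyc. is_cycle E (insert p (W \<union> F1 \<union> F2)) n cyc"
proof -
  define c where "c = n - 4 - j1 - j2"
  have s1: "\<forall>u\<in>L1. (u \<in> Q) = ((x1 \<in> Q) \<longleftrightarrow> even j1)"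
    using L1(4) bipartite_on_path_end[OF bip sub(2)] by blast
  have s2: "\<forall>u\<in>L2. (u \<in> Q) = ((x2 \<in> Q) \<longleftrightarrow> even j2)"
    using L2(4) bipartite_on_path_end[OF bip sub(3)] by blast
  have "even c \<longleftrightarrow> (((x1 \<in> Q) \<longleftrightarrow> even j1) \<longleftrightarrow> ((x2 \<in> Q) \<longleftrightarrow> even j2))"
    using x(3) n(1) unfolding c_def by auto
  moreover have "4 * m1 + c \<le> length U" "L1 \<subseteq> Q \<union> R" "L2 \<subseteq> Q \<union> R"
    using U(4) n L1(1) L2(1) sub(2,3) unfolding c_def by auto
  ultimately obtain s where sc: "s + c < length U" and "\<exists>u\<in>L1. E u (U ! s)" "\<exists>u\<in>L2. E u (U ! (s + c))"
    using bipartite_on_segment_ends_adjacent[OF sym bip hf sub(1) fW U(1-3) _ _ L1(2,3) s1 _ L2(2,3) s2]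
    by blast
  then obtain u1 ps1 u2 ps2 where u1: "E u1 (U ! s)" "is_path E F1 x1 u1 ps1" "length ps1 = Suc j1"
    and u2: "E u2 (U ! (s + c))" "is_path E F2 x2 u2 ps2" "length ps2 = Suc j2"
    using L1(4) L2(4) by blast
  define seg where "seg = take (Suc c) (drop s U)"
  note seg = take_drop_segment[OF sc, folded seg_def]
  have "distinct seg" "successively E seg" "set seg \<subseteq> W"
    unfolding seg_def using U(1,2,3) seg(5)[unfolded seg_def]
    by (auto simp: successively_take successively_drop)
  moreover have "E (last seg) u2" using u2(1) seg(3) sym by (simp add: sympD)
  ultimately have "is_cycle E (insert p (W \<union> F1 \<union> F2)) (length ps1 + length seg + length ps2 + 1)
      (p # ps1 @ seg @ rev ps2)"
    using is_cycle_join[OF sym u1(2) u2(2) seg(1) _ _ _ x(1,2) _ _ disj] u1(1) seg(2) by simp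
  moreover have "length ps1 + length seg + length ps2 + 1 = n" using u1(3) u2(3) seg(4) n unfolding c_def by simp
  ultimately show ?thesis by auto
qed

lemma bipartite_on_cycle_through_expanding:
  assumes sym: "symp E" and bip: "bipartite_on E Q R"
    and hf: "hole_free E m1 m2 Q R" "hole_free E m1 m2 R Q"
    and sub: "W \<subseteq> Q \<union> R" "Y1 \<subseteq> Q \<union> R" "Y2 \<subseteq> Q \<union> R" and fin: "finite W" "finite Y1" "finite Y2"
    and disj: "W \<inter> Y1 = {}" "W \<inter> Y2 = {}" "Y1 \<inter> Y2 = {}" "p \<notin> W \<union> Y1 \<union> Y2"
    and U: "distinct U" "set U \<subseteq> W" "successively E U" "4 * m1 + m2 \<le> length U"
    and Y: "expanding E (2 * m2) Y1" "expanding E (2 * m2) Y2"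
    and x: "x1 \<in> Y1" "x2 \<in> Y2" "E p x1" "E p x2" "((x1 \<in> Q) \<longleftrightarrow> (x2 \<in> Q)) \<longleftrightarrow> even n"
    and m2: "m2 \<ge> 1" and K: "4 * m2 \<le> 2 ^ K" and n: "2 * K + 2 \<le> n" "n \<le> m2"
  shows "\<exists>cyc. is_cycle E (insert p (W \<union> Y1 \<union> Y2)) n cyc"
proof -
  obtain j1 L1 where L1: "2 ^ j1 \<le> 2 * m2" "L1 \<subseteq> Y1" "m2 \<le> card L1" "finite L1"
      "\<forall>u\<in>L1. \<exists>ps. is_path E Y1 x1 u ps \<and> length ps = Suc j1"
    using expanding_large_sphere[OF fin(2) x(1) m2 Y(1)] by blast
  obtain j2 L2 where L2: "2 ^ j2 \<le> 2 * m2" "L2 \<subseteq> Y2" "m2 \<le> card L2" "finite L2"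
      "\<forall>u\<in>L2. \<exists>ps. is_path E Y2 x2 u ps \<and> length ps = Suc j2"
    using expanding_large_sphere[OF fin(3) x(2) m2 Y(2)] by blast
  have "(2::nat) ^ Suc j1 \<le> 2 ^ K" using L1(1) K by simp
  hence "Suc j1 \<le> K" by (rule power_le_imp_le_exp[rotated]) simp
  moreover have "(2::nat) ^ Suc j2 \<le> 2 ^ K" using L2(1) K by simp
  hence "Suc j2 \<le> K" by (rule power_le_imp_le_exp[rotated]) simp
  ultimately have "j1 + j2 + 4 \<le> n" using n by linarith
  thus ?thesis
    using bipartite_on_close_cycle[OF sym bip hf sub fin(1) disj U x(3,4,5) L1(2,4,3,5) L2(2,4,3,5)] n(2)
    by blast
qed

lemma hole_free_common_neighbour:
  assumes sym: "symp E" and P: "finite P" "m1 + m2 - 1 \<le> card P"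
    and Z: "finite Z1" "m2 \<le> card Z1" "finite Z2" "m1 \<le> card Z2"
    and hf: "hole_free E m1 m2 P Z1" "hole_free E m1 m2 Z2 P"
  obtains p x1 x2 where "p \<in> P" "x1 \<in> Z1" "x2 \<in> Z2" "E p x1" "E p x2"
proof -
  have "card {p\<in>P. \<not> (\<exists>y\<in>Z1. E p y)} < m1"
    by (rule hole_free_card_nonadjacent_left[OF hf(1) _ _ _ Z(1,2)]) (use P in auto)
  moreover have "card {p\<in>P. \<not> (\<exists>y\<in>Z2. E p y)} < m2"
    by (rule hole_free_card_nonadjacent_right[OF hf(2) _ _ _ Z(3,4)]) (use P sym in \<open>auto dest: sympD\<close>)
  ultimately have "\<exists>p\<in>P. (\<exists>y\<in>Z1. E p y) \<and> (\<exists>y\<in>Z2. E p y)"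
    by (intro exists_in_both_if_few_fail[OF P])
  thus thesis using that by blast
qed

text \<open>The neighbours lie on different sides for odd \<open>n\<close> (common neighbour in \<open>P\<close>) and on the
  side \<open>R\<close> for even \<open>n\<close> (common neighbour in \<open>P' \<subseteq> Q\<close>).\<close>

lemma hole_free_common_neighbour_parity:
  assumes sym: "symp E" and QR: "Q \<inter> R = {}"
    and hQR: "hole_free E m1 m2 Q R" and hRQ: "hole_free E m1 m2 R Q"
    and hPQ: "hole_free E m1 m2 P Q" and hRP: "hole_free E m1 m2 R P"
    and P: "finite P" "m1 + m2 - 1 \<le> card P" and P': "P' \<subseteq> Q" "finite P'" "m1 + m2 - 1 \<le> card P'"
    and Z: "Z1 \<subseteq> Q" "Z1' \<subseteq> R" "Z2 \<subseteq> R" "finite Z1" "finite Z1'" "finite Z2"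
      "m2 \<le> card Z1" "m2 \<le> card Z1'" "m1 \<le> card Z2"
  obtains p x1 x2 where "p \<in> P \<union> P'" "x1 \<in> Z1 \<union> Z1'" "x2 \<in> Z2" "E p x1" "E p x2"
    "((x1 \<in> Q) \<longleftrightarrow> (x2 \<in> Q)) \<longleftrightarrow> even n"
proof (cases "even n")
  case False
  have "hole_free E m1 m2 P Z1" by (rule hole_free_subset[OF hPQ]) (use Z(1) in auto)
  moreover have "hole_free E m1 m2 Z2 P" by (rule hole_free_subset[OF hRP]) (use Z(3) in auto)
  ultimately obtain p x1 x2 where px: "p \<in> P" "x1 \<in> Z1" "x2 \<in> Z2" "E p x1" "E p x2"
    using hole_free_common_neighbour[OF sym P Z(4,7,6,9)] by blast
  moreover have "x1 \<in> Q" "x2 \<notin> Q" using px(2,3) Z(1,3) QR by auto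
  ultimately show thesis using that[of p x1 x2] False by auto
next
  case True
  have "hole_free E m1 m2 P' Z1'" by (rule hole_free_subset[OF hQR]) (use P'(1) Z(2) in auto)
  moreover have "hole_free E m1 m2 Z2 P'" by (rule hole_free_subset[OF hRQ]) (use P'(1) Z(3) in auto)
  ultimately obtain p x1 x2 where px: "p \<in> P'" "x1 \<in> Z1'" "x2 \<in> Z2" "E p x1" "E p x2"
    using hole_free_common_neighbour[OF sym P'(2,3) Z(5,8,6,9)] by blast
  moreover have "x1 \<notin> Q" "x2 \<notin> Q" using px(2,3) Z(2,3) QR by auto
  ultimately show thesis using that[of p x1 x2] True by auto
qed

text \<open>\<open>Q\<close> and \<open>R\<close> each contribute a part \<open>W\<close> carrying a long path and two parts \<open>F\<^sub>1, F\<^sub>2\<close>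
  containing expanding sets \<open>Y\<^sub>1, Y\<^sub>2\<close>; \<open>Q\<close> also provides the reserve \<open>P'\<close>.\<close>

lemma hole_free_triple_has_cycle:
  assumes fin: "finite P" "finite Q" "finite R"
    and disj: "P \<inter> Q = {}" "P \<inter> R = {}" and sym: "symp E" and bip: "bipartite_on E Q R"
    and P: "m1 + m2 - 1 \<le> card P" and Q: "8 * m1 + 19 * m2 \<le> card Q" and R: "8 * m1 + 19 * m2 \<le> card R"
    and m: "m1 \<ge> 1" "m2 \<ge> 1" and K: "4 * m2 \<le> 2 ^ K" and n: "2 * K + 2 \<le> n" "n \<le> m2"
    and hQR: "hole_free E m1 m2 Q R" and hRQ: "hole_free E m1 m2 R Q"
    and hPQ: "hole_free E m1 m2 P Q" and hRP: "hole_free E m1 m2 R P"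
  shows "\<exists>cyc. is_cycle E (P \<union> Q \<union> R) n cyc"
proof -
  have QR: "Q \<inter> R = {}" using bip unfolding bipartite_on_def by blast
  have "m1 + m2 - 1 \<le> card Q" using Q by linarith
  then obtain P' where P': "P' \<subseteq> Q" "card P' = m1 + m2 - 1" "card (Q - P') = card Q - (m1 + m2 - 1)"
    using obtain_subset_with_card_Diff[OF fin(2)] by blast
  obtain WQ F1Q F2Q where QQ: "WQ \<subseteq> Q - P'" "F1Q \<subseteq> Q - P'" "F2Q \<subseteq> Q - P'"
      "WQ \<inter> F1Q = {}" "WQ \<inter> F2Q = {}" "F1Q \<inter> F2Q = {}"
      "card WQ = 5 * m1 + 2 * m2" "card F1Q = m1 + 8 * m2" "card F2Q = m1 + 8 * m2"
    by (rule obtain_three_disjoint_subsets[of "Q - P'"]) (use fin(2) P'(3) Q in auto)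
  obtain WR F1R F2R where RR: "WR \<subseteq> R" "F1R \<subseteq> R" "F2R \<subseteq> R"
      "WR \<inter> F1R = {}" "WR \<inter> F2R = {}" "F1R \<inter> F2R = {}"
      "card WR = 5 * m1 + 2 * m2" "card F1R = m1 + 8 * m2" "card F2R = m1 + 8 * m2"
    by (rule obtain_three_disjoint_subsets[of R]) (use fin(3) R in auto)
  have finQR: "finite WQ" "finite F1Q" "finite F2Q" "finite WR" "finite F1R" "finite F2R"
    using QQ(1-3) RR(1-3) fin(2,3) finite_subset by blast+
  have hf: "\<And>A B. A \<subseteq> Q \<Longrightarrow> B \<subseteq> R \<Longrightarrow> hole_free E m1 m2 A B \<and> hole_free E m1 m2 B A"
    using hQR hRQ hole_free_subset by blast
  have hW: "hole_free E m1 m2 WR WQ" "hole_free E m1 m2 WQ WR" using hf[of WQ WR] QQ(1) RR(1) by auto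
  have hF1: "hole_free E m1 m2 F1R F1Q" "hole_free E m1 m2 F1Q F1R" using hf[of F1Q F1R] QQ(2) RR(2) by auto
  have hF2: "hole_free E m1 m2 F2R F2Q" "hole_free E m1 m2 F2Q F2R" using hf[of F2Q F2R] QQ(3) RR(3) by auto
  obtain U where U: "distinct U" "set U \<subseteq> WQ \<union> WR" "successively E U"
      "min (card WQ) (card WR) + 2 \<le> length U + m1 + m2"
    by (rule hole_free_long_path[OF finQR(1,4) _ sym hW m]) (use QQ(1,7) RR(1) QR in auto)
  have lU: "4 * m1 + m2 \<le> length U" using U(4) QQ(7) RR(7) by simp
  obtain Y1 where Y1: "Y1 \<subseteq> F1Q \<union> F1R" "expanding E (2 * m2) Y1"
      "m1 + 6 * m2 \<le> card (F1Q \<inter> Y1)" "m1 + 6 * m2 \<le> card (F1R \<inter> Y1)"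
    by (rule hole_free_obtain_expanding_subset[OF finQR(2,5) _ sym hF1 _ _ m(2)])
      (use QQ(2,8) RR(2,8) QR in auto)
  obtain Y2 where Y2: "Y2 \<subseteq> F2Q \<union> F2R" "expanding E (2 * m2) Y2"
      "m1 + 6 * m2 \<le> card (F2Q \<inter> Y2)" "m1 + 6 * m2 \<le> card (F2R \<inter> Y2)"
    by (rule hole_free_obtain_expanding_subset[OF finQR(3,6) _ sym hF2 _ _ m(2)])
      (use QQ(3,9) RR(3,9) QR in auto)
  have fY: "finite Y1" "finite Y2" using Y1(1) Y2(1) finQR finite_subset by blast+
  have "finite P'" "m1 + m2 - 1 \<le> card P'" using fin(2) P'(1,2) finite_subset by auto
  moreover have "F1Q \<inter> Y1 \<subseteq> Q" "F1R \<inter> Y1 \<subseteq> R" "F2R \<inter> Y2 \<subseteq> R"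
    "finite (F1Q \<inter> Y1)" "finite (F1R \<inter> Y1)" "finite (F2R \<inter> Y2)"
    "m2 \<le> card (F1Q \<inter> Y1)" "m2 \<le> card (F1R \<inter> Y1)" "m1 \<le> card (F2R \<inter> Y2)"
    using fY Y1(3,4) Y2(4) QQ(2) RR(2,3) by auto
  ultimately obtain p x1 x2 where px: "p \<in> P \<union> P'" "x1 \<in> (F1Q \<inter> Y1) \<union> (F1R \<inter> Y1)" "x2 \<in> F2R \<inter> Y2"
      "E p x1" "E p x2" "((x1 \<in> Q) \<longleftrightarrow> (x2 \<in> Q)) \<longleftrightarrow> even n"
    using hole_free_common_neighbour_parity[OF sym QR hQR hRQ hPQ hRP fin(1) P P'(1)] by blast
  have x: "x1 \<in> Y1" "x2 \<in> Y2" using px(2,3) by auto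
  let ?W = "WQ \<union> WR"
  have sub: "?W \<subseteq> Q \<union> R" "Y1 \<subseteq> Q \<union> R" "Y2 \<subseteq> Q \<union> R" using QQ RR Y1(1) Y2(1) by auto
  have "?W \<inter> (F1Q \<union> F1R) = {}" "?W \<inter> (F2Q \<union> F2R) = {}" "(F1Q \<union> F1R) \<inter> (F2Q \<union> F2R) = {}"
    using QQ(1-6) RR(1-6) QR by blast+
  hence dis: "?W \<inter> Y1 = {}" "?W \<inter> Y2 = {}" "Y1 \<inter> Y2 = {}" using Y1(1) Y2(1) by blast+
  have "?W \<union> Y1 \<union> Y2 \<subseteq> (Q - P') \<union> R" using QQ(1-3) RR(1-3) Y1(1) Y2(1) by auto
  hence "p \<notin> ?W \<union> Y1 \<union> Y2" using px(1) disj P'(1) QR by blast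
  then obtain cyc where cyc: "is_cycle E (insert p (?W \<union> Y1 \<union> Y2)) n cyc"
    using bipartite_on_cycle_through_expanding[OF sym bip hQR hRQ sub _ fY dis _ U(1-3) lU Y1(2) Y2(2)
        x px(4-6) m(2) K n] finQR by blast
  moreover have "insert p (?W \<union> Y1 \<union> Y2) \<subseteq> P \<union> Q \<union> R" using px(1) sub P'(1) by auto
  ultimately show ?thesis using is_cycle_mono[OF cyc] by blast
qed

definition mono_cycle :: "(nat \<Rightarrow> nat \<Rightarrow> nat) \<Rightarrow> nat \<Rightarrow> nat \<Rightarrow> nat set \<Rightarrow> bool" where
  "mono_cycle c col n V \<longleftrightarrow> (\<exists>cyc. is_cycle (\<lambda>u v. c u v = col) V n cyc)"

definition colour_hole :: "(nat \<Rightarrow> nat \<Rightarrow> nat) \<Rightarrow> nat \<Rightarrow> nat \<Rightarrow> nat \<Rightarrow> nat set \<Rightarrow> bool" where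
  "colour_hole c t m1 m2 V \<longleftrightarrow> (\<exists>X Y. X \<subseteq> V \<and> Y \<subseteq> V \<and> X \<inter> Y = {} \<and> card X = m1 \<and> card Y = m2 \<and>
      finite X \<and> finite Y \<and> (\<forall>x\<in>X. \<forall>y\<in>Y. c x y \<notin> {1..t}))"

definition cross :: "nat set \<Rightarrow> nat set \<Rightarrow> nat set \<Rightarrow> nat \<Rightarrow> nat \<Rightarrow> bool" where
  "cross P Q R u v \<longleftrightarrow> (u \<in> Q \<and> v \<in> R) \<or> (u \<in> R \<and> v \<in> Q) \<or> (u \<in> P \<and> (v \<in> Q \<or> v \<in> R)) \<or>
     ((u \<in> Q \<or> u \<in> R) \<and> v \<in> P)"

lemma mono_cycle_mono:
  assumes "mono_cycle c col n X" "X \<subseteq> V"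
  shows "mono_cycle c col n V"
proof -
  obtain cyc where "is_cycle (\<lambda>u v. c u v = col) X n cyc" using assms(1) unfolding mono_cycle_def by blast
  hence "is_cycle (\<lambda>u v. c u v = col) V n cyc" by (rule is_cycle_mono) (use assms(2) in auto)
  thus ?thesis unfolding mono_cycle_def by blast
qed

lemma colour_hole_if_not_hole_free:
  assumes "\<not> hole_free (\<lambda>u v. c u v = Suc s \<and> D u v) m1 m2 A B"
    and "\<forall>x\<in>A. \<forall>y\<in>B. D x y \<and> c x y \<notin> {1..s}" "A \<subseteq> V" "B \<subseteq> V" "A \<inter> B = {}"
  shows "colour_hole c (Suc s) m1 m2 V"
proof -
  obtain X Y where XY: "X \<subseteq> A" "Y \<subseteq> B" "card X = m1" "card Y = m2" "finite X" "finite Y"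
    "\<forall>x\<in>X. \<forall>y\<in>Y. \<not> (c x y = Suc s \<and> D x y)"
    by (rule obtain_hole_if_not_hole_free[OF assms(1)])
  have "\<forall>x\<in>X. \<forall>y\<in>Y. c x y \<notin> {1..Suc s}"
  proof (intro ballI)
    fix x y assume "x \<in> X" "y \<in> Y"
    hence "D x y" "c x y \<notin> {1..s}" "c x y \<noteq> Suc s" using XY(1,2,7) assms(2) by blast+
    thus "c x y \<notin> {1..Suc s}" by auto
  qed
  moreover have "X \<subseteq> V" "Y \<subseteq> V" "X \<inter> Y = {}" using XY(1,2) assms(3-5) by blast+
  ultimately show ?thesis unfolding colour_hole_def using XY(3-6) by blast
qed

lemma cross_nested_colour_holes:
  assumes csym: "\<forall>x\<in>V. \<forall>y\<in>V. x \<noteq> y \<longrightarrow> c x y = c y x"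
    and XY: "X \<subseteq> V" "Y \<subseteq> V" "X \<inter> Y = {}" "\<forall>x\<in>X. \<forall>y\<in>Y. c x y \<notin> {1..s}"
    and H: "X1 \<subseteq> X" "Y1 \<subseteq> X" "X1 \<inter> Y1 = {}" "\<forall>x\<in>X1. \<forall>y\<in>Y1. c x y \<notin> {1..s}"
    and uv: "cross Y1 X1 Y u v"
  shows "c u v \<notin> {1..s}"
proof -
  have "u \<in> V" "v \<in> V" "u \<noteq> v" using uv H(1-3) XY(1-3) unfolding cross_def by blast+
  hence "c u v = c v u" using csym by blast
  moreover have "(u \<in> X \<and> v \<in> Y) \<or> (v \<in> X \<and> u \<in> Y) \<or> (u \<in> X1 \<and> v \<in> Y1) \<or> (v \<in> X1 \<and> u \<in> Y1)"
    using uv H(1,2) unfolding cross_def by blast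
  ultimately show ?thesis using XY(4) H(4) by metis
qed

lemma triple_mono_cycle_or_colour_hole:
  assumes fin: "finite P" "finite Q" "finite R"
    and disj: "P \<inter> Q = {}" "P \<inter> R = {}" "Q \<inter> R = {}" and sub: "P \<subseteq> V" "Q \<subseteq> V" "R \<subseteq> V"
    and P: "m1 + m2 - 1 \<le> card P" and Q: "8 * m1 + 19 * m2 \<le> card Q" and R: "8 * m1 + 19 * m2 \<le> card R"
    and csym: "\<forall>x\<in>V. \<forall>y\<in>V. x \<noteq> y \<longrightarrow> c x y = c y x"
    and old: "\<forall>u v. cross P Q R u v \<longrightarrow> c u v \<notin> {1..s}"
    and m: "m1 \<ge> 1" "m2 \<ge> 1" and K: "4 * m2 \<le> 2 ^ K" and n: "2 * K + 2 \<le> n" "n \<le> m2"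
  shows "mono_cycle c (Suc s) n V \<or> colour_hole c (Suc s) m1 m2 V"
proof -
  define E where "E = (\<lambda>u v. c u v = Suc s \<and> cross P Q R u v)"
  have cross_sym: "cross P Q R u v \<Longrightarrow> cross P Q R v u" for u v unfolding cross_def by blast
  have cross_V: "cross P Q R u v \<Longrightarrow> u \<in> V \<and> v \<in> V \<and> u \<noteq> v" for u v
    unfolding cross_def using sub disj by blast
  have sym: "symp E"
  proof (rule sympI)
    fix u v assume "E u v"
    hence "c u v = Suc s" "cross P Q R u v" unfolding E_def by auto
    moreover have "c u v = c v u" using csym cross_V[OF calculation(2)] by blast
    ultimately show "E v u" unfolding E_def using cross_sym by simp
  qed
  have bip: "bipartite_on E Q R" unfolding bipartite_on_def E_def cross_def using disj by blast
  have hole: "colour_hole c (Suc s) m1 m2 V"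
    if "\<not> hole_free E m1 m2 A B" "\<forall>x\<in>A. \<forall>y\<in>B. cross P Q R x y" "A \<subseteq> V" "B \<subseteq> V" "A \<inter> B = {}"
    for A B
    using colour_hole_if_not_hole_free[OF that(1)[unfolded E_def]] that(2-5) old by blast
  show ?thesis
  proof (cases "hole_free E m1 m2 Q R \<and> hole_free E m1 m2 R Q \<and> hole_free E m1 m2 P Q \<and> hole_free E m1 m2 R P")
    case True
    then obtain cyc where "is_cycle E (P \<union> Q \<union> R) n cyc"
      using hole_free_triple_has_cycle[OF fin disj(1,2) sym bip P Q R m K n] by blast
    hence "is_cycle (\<lambda>u v. c u v = Suc s) V n cyc" by (rule is_cycle_mono) (use sub E_def in auto)
    thus ?thesis unfolding mono_cycle_def by blast
  next
    case False
    then consider "\<not> hole_free E m1 m2 Q R" | "\<not> hole_free E m1 m2 R Q"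
      | "\<not> hole_free E m1 m2 P Q" | "\<not> hole_free E m1 m2 R P" by blast
    thus ?thesis
    proof cases
      case 1
      show ?thesis by (rule disjI2, rule hole[OF 1]) (use sub disj in \<open>auto simp: cross_def\<close>)
    next
      case 2
      show ?thesis by (rule disjI2, rule hole[OF 2]) (use sub disj in \<open>auto simp: cross_def\<close>)
    next
      case 3
      show ?thesis by (rule disjI2, rule hole[OF 3]) (use sub disj in \<open>auto simp: cross_def\<close>)
    next
      case 4
      show ?thesis by (rule disjI2, rule hole[OF 4]) (use sub disj in \<open>auto simp: cross_def\<close>)
    qed
  qed
qed

lemma nested_colour_holes_mono_cycle_or_colour_hole:
  assumes csym: "\<forall>x\<in>V. \<forall>y\<in>V. x \<noteq> y \<longrightarrow> c x y = c y x"
    and XY: "X \<subseteq> V" "Y \<subseteq> V" "X \<inter> Y = {}" "finite Y" "8 * m1 + 19 * m2 \<le> card Y"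
      "\<forall>x\<in>X. \<forall>y\<in>Y. c x y \<notin> {1..s}"
    and H: "colour_hole c s a (m1 + m2 - 1) X" "8 * m1 + 19 * m2 \<le> a"
    and m: "m1 \<ge> 1" "m2 \<ge> 1" and K: "4 * m2 \<le> 2 ^ K" and n: "2 * K + 2 \<le> n" "n \<le> m2"
  shows "mono_cycle c (Suc s) n V \<or> colour_hole c (Suc s) m1 m2 V"
proof -
  obtain X1 Y1 where H': "X1 \<subseteq> X" "Y1 \<subseteq> X" "X1 \<inter> Y1 = {}" "card X1 = a" "card Y1 = m1 + m2 - 1"
    "finite X1" "finite Y1" "\<forall>x\<in>X1. \<forall>y\<in>Y1. c x y \<notin> {1..s}"
    using H(1) unfolding colour_hole_def by blast
  have "\<forall>u v. cross Y1 X1 Y u v \<longrightarrow> c u v \<notin> {1..s}"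
    using cross_nested_colour_holes[OF csym XY(1-3,6) H'(1-3,8)] by blast
  moreover have "Y1 \<inter> X1 = {}" "Y1 \<inter> Y = {}" "X1 \<inter> Y = {}" using H'(1-3) XY(3) by auto
  moreover have "Y1 \<subseteq> V" "X1 \<subseteq> V" using H'(1,2) XY(1) by auto
  moreover have "m1 + m2 - 1 \<le> card Y1" "8 * m1 + 19 * m2 \<le> card X1" using H'(4,5) H(2) by simp_all
  ultimately show ?thesis
    using triple_mono_cycle_or_colour_hole[OF H'(7,6) XY(4) _ _ _ _ _ XY(2) _ _ XY(5) csym _ m K n] by blast
qed

lemma f_seq_ge: "33 * x + 49 * y \<le> f_seq (Suc t) x y"
proof (induction t arbitrary: x y)
  case 0
  thus ?case by simp
next
  case (Suc t)
  let ?a = "32 * x + 49 * y"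
  have "33 * f_seq (Suc t) ?a (x + y - 1) + 49 * ?a \<le> f_seq (Suc t) (f_seq (Suc t) ?a (x + y - 1)) ?a"
    by (rule Suc.IH)
  thus ?case by simp
qed

lemma mono_cycle_or_colour_hole:
  assumes "m1 \<ge> 1" "m2 \<ge> 1" "length ns = Suc t" "\<forall>i<Suc t. 2 * K + 2 \<le> ns ! i \<and> ns ! i \<le> m2"
    "f_seq (Suc t) m1 m2 \<le> 2 ^ K" "finite V" "f_seq (Suc t) m1 m2 \<le> card V"
    "\<forall>x\<in>V. \<forall>y\<in>V. x \<noteq> y \<longrightarrow> c x y = c y x"
  shows "(\<exists>i<Suc t. mono_cycle c (Suc i) (ns ! i) V) \<or> colour_hole c (Suc t) m1 m2 V"
  using assms
proof (induction t arbitrary: m1 m2 ns V)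
  case 0
  hence V: "(m1 + m2 - 1) + (8 * m1 + 19 * m2) + (8 * m1 + 19 * m2) \<le> card V" by simp
  obtain P Q R where PQR: "P \<subseteq> V" "Q \<subseteq> V" "R \<subseteq> V" "P \<inter> Q = {}" "P \<inter> R = {}" "Q \<inter> R = {}"
    "card P = m1 + m2 - 1" "card Q = 8 * m1 + 19 * m2" "card R = 8 * m1 + 19 * m2"
    by (rule obtain_three_disjoint_subsets[OF \<open>finite V\<close> V])
  have "finite P" "finite Q" "finite R" using PQR(1-3) \<open>finite V\<close> finite_subset by blast+
  moreover have "4 * m2 \<le> 2 ^ K" using "0.prems"(5) by simp
  ultimately have "mono_cycle c 1 (ns ! 0) V \<or> colour_hole c 1 m1 m2 V"
    using triple_mono_cycle_or_colour_hole[OF _ _ _ PQR(4-6,1-3) _ _ _ "0.prems"(8) _ "0.prems"(1,2)]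
      PQR(7-9) "0.prems"(4) by simp
  thus ?case by auto
next
  case (Suc t)
  define a where "a = 32 * m1 + 49 * m2"
  define b where "b = m1 + m2 - 1"
  define ns' where "ns' = take (Suc t) ns"
  have f: "f_seq (Suc (Suc t)) m1 m2 = f_seq (Suc t) (f_seq (Suc t) a b) a" unfolding a_def b_def by simp
  have ab: "1 \<le> a" "1 \<le> b" "1 \<le> f_seq (Suc t) a b" "m2 \<le> a" "m2 \<le> b"
    using f_seq_ge[of a b t] Suc.prems(1,2) unfolding a_def b_def by auto
  have ns': "length ns' = Suc t" "\<And>i. i < Suc t \<Longrightarrow> ns' ! i = ns ! i"
    using Suc.prems(3) unfolding ns'_def by simp_all
  have "\<forall>i<Suc t. 2 * K + 2 \<le> ns' ! i \<and> ns' ! i \<le> a" "\<forall>i<Suc t. 2 * K + 2 \<le> ns' ! i \<and> ns' ! i \<le> b"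
    using Suc.prems(4) ns'(2) ab(4,5) by (metis le_trans less_SucI)+
  note IH = Suc.IH[OF _ _ ns'(1) this(1)] Suc.IH[OF _ _ ns'(1) this(2)]
  have small: "f_seq (Suc t) a b \<le> 2 ^ K"
    using f_seq_ge[of "f_seq (Suc t) a b" a t] Suc.prems(5) f by linarith
  have cycle: "\<exists>i<Suc (Suc t). mono_cycle c (Suc i) (ns ! i) V"
    if "\<exists>i<Suc t. mono_cycle c (Suc i) (ns' ! i) X" "X \<subseteq> V" for X
    using that ns'(2) mono_cycle_mono by (metis less_SucI)
  from IH(1)[OF ab(3,1) _ Suc.prems(6)] Suc.prems(5-8) f
  consider "\<exists>i<Suc t. mono_cycle c (Suc i) (ns' ! i) V" | "colour_hole c (Suc t) (f_seq (Suc t) a b) a V"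
    by auto
  thus ?case
  proof cases
    case 1
    thus ?thesis using cycle by blast
  next
    case 2
    then obtain X Y where XY: "X \<subseteq> V" "Y \<subseteq> V" "X \<inter> Y = {}" "card X = f_seq (Suc t) a b" "card Y = a"
      "finite X" "finite Y" "\<forall>x\<in>X. \<forall>y\<in>Y. c x y \<notin> {1..Suc t}" unfolding colour_hole_def by blast
    have "\<forall>x\<in>X. \<forall>y\<in>X. x \<noteq> y \<longrightarrow> c x y = c y x" using Suc.prems(8) XY(1) by blast
    with IH(2)[OF ab(1,2) small XY(6)] XY(4)
    consider "\<exists>i<Suc t. mono_cycle c (Suc i) (ns' ! i) X" | "colour_hole c (Suc t) a b X"
      by auto
    thus ?thesis
    proof cases
      case 1
      thus ?thesis using cycle XY(1) by blast
    next
      case 2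
      have "8 * m1 + 19 * m2 \<le> card Y" "8 * m1 + 19 * m2 \<le> a" using XY(5) unfolding a_def by simp_all
      moreover have "4 * m2 \<le> 2 ^ K" using f_seq_ge[of m1 m2 "Suc t"] Suc.prems(5) by linarith
      moreover have "2 * K + 2 \<le> ns ! Suc t" "ns ! Suc t \<le> m2" using Suc.prems(4) by auto
      ultimately have "mono_cycle c (Suc (Suc t)) (ns ! Suc t) V \<or> colour_hole c (Suc (Suc t)) m1 m2 V"
        using nested_colour_holes_mono_cycle_or_colour_hole[OF Suc.prems(8) XY(1-3,7) _ XY(8)
            2[unfolded b_def] _ Suc.prems(1,2)] by blast
      thus ?thesis by auto
    qed
  qed
qed

lemma has_mono_copy_cycle_graph:
  assumes n: "2 \<le> n" and cyc: "is_cycle (\<lambda>u v. c u v = col) {..<N} n cyc"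
    and csym: "\<forall>x y. x < N \<longrightarrow> y < N \<longrightarrow> x \<noteq> y \<longrightarrow> c x y = c y x"
  shows "has_mono_copy N c col (cycle_graph n)"
proof -
  have cy: "length cyc = n" "distinct cyc" "set cyc \<subseteq> {..<N}"
    "successively (\<lambda>u v. c u v = col) cyc" "c (last cyc) (hd cyc) = col"
    using cyc unfolding is_cycle_def by auto
  have ne: "cyc \<noteq> []" using cy(1) n by auto
  have inN: "cyc ! j < N" if "j < n" for j using cy(1,3) that nth_mem by blast
  have edge: "c (cyc ! j) (cyc ! ((j + 1) mod n)) = col" if j: "j < n" for j
  proof (cases "Suc j < n")
    case True
    thus ?thesis using successively_nth[OF cy(4)] cy(1) by simp
  next
    case False
    hence "Suc j = n" using j by simp
    hence "j = n - 1" "(j + 1) mod n = 0" by auto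
    thus ?thesis using cy(1,5) ne by (simp add: last_conv_nth hd_conv_nth)
  qed
  have edge': "c (cyc ! ((j + 1) mod n)) (cyc ! j) = col" if j: "j < n" for j
  proof -
    have "j \<noteq> (j + 1) mod n"
    proof (cases "Suc j < n")
      case False
      hence "Suc j = n" using j by simp
      thus ?thesis using n by auto
    qed simp
    hence "cyc ! j \<noteq> cyc ! ((j + 1) mod n)" using cy(1,2) j n by (simp add: nth_eq_iff_index_eq)
    thus ?thesis using edge[OF j] csym inN[OF j] inN[of "(j + 1) mod n"] n by fastforce
  qed
  show ?thesis unfolding has_mono_copy_def cycle_graph_def fst_conv snd_conv
  proof (intro exI[of _ "\<lambda>j. cyc ! j"] conjI allI impI)
    show "inj_on (\<lambda>j. cyc ! j) {0..<n}" using cy(1,2) by (auto simp: inj_on_def nth_eq_iff_index_eq)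
    show "(\<lambda>j. cyc ! j) ` {0..<n} \<subseteq> {..<N}" using inN by auto
    fix x y assume "{x, y} \<in> {{j, (j + 1) mod n} |j. j < n}"
    then obtain j where j: "j < n" "{x, y} = {j, (j + 1) mod n}" by auto
    hence "(x = j \<and> y = (j + 1) mod n) \<or> (x = (j + 1) mod n \<and> y = j)" by (auto simp: doubleton_eq_iff)
    thus "c (cyc ! x) (cyc ! y) = col" using edge[OF j(1)] edge'[OF j(1)] by auto
  qed
qed

lemma has_mono_copy_complete_bipartite:
  assumes XY: "X \<subseteq> {..<N}" "Y \<subseteq> {..<N}" "X \<inter> Y = {}" "card X = m1" "card Y = m2" "finite X" "finite Y"
    and col: "\<forall>x\<in>X. \<forall>y\<in>Y. c x y = col"
    and csym: "\<forall>x y. x < N \<longrightarrow> y < N \<longrightarrow> x \<noteq> y \<longrightarrow> c x y = c y x"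
  shows "has_mono_copy N c col (complete_bipartite m1 m2)"
proof -
  obtain f where f: "bij_betw f {0..<m1} X" using ex_bij_betw_nat_finite[OF XY(6)] XY(4) by blast
  obtain g where g: "bij_betw g {m1..<m1 + m2} Y" using finite_same_card_bij[of "{m1..<m1 + m2}" Y] XY(5,7) by auto
  define \<phi> where "\<phi> i = (if i < m1 then f i else g i)" for i
  have "bij_betw \<phi> {0..<m1} X" using f by (rule bij_betw_cong[THEN iffD1, rotated]) (simp add: \<phi>_def)
  moreover have "bij_betw \<phi> {m1..<m1 + m2} Y" using g by (rule bij_betw_cong[THEN iffD1, rotated]) (simp add: \<phi>_def)
  ultimately have "bij_betw \<phi> ({0..<m1} \<union> {m1..<m1 + m2}) (X \<union> Y)"
    using XY(3) by (rule bij_betw_combine)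
  moreover have "{0..<m1} \<union> {m1..<m1 + m2} = {0..<m1 + m2}" by auto
  ultimately have \<phi>: "bij_betw \<phi> {0..<m1 + m2} (X \<union> Y)" by simp
  have \<phi>X: "\<phi> i \<in> X" if "i < m1" for i using f that unfolding \<phi>_def bij_betw_def by auto
  have \<phi>Y: "\<phi> j \<in> Y" if "m1 \<le> j" "j < m1 + m2" for j using g that unfolding \<phi>_def bij_betw_def by auto
  show ?thesis unfolding has_mono_copy_def complete_bipartite_def fst_conv snd_conv
  proof (intro exI[of _ \<phi>] conjI allI impI)
    show "inj_on \<phi> {0..<m1 + m2}" using \<phi> by (rule bij_betw_imp_inj_on)
    show "\<phi> ` {0..<m1 + m2} \<subseteq> {..<N}" using \<phi> XY(1,2) by (simp add: bij_betw_def)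
    fix x y assume "{x, y} \<in> {{i, j} |i j. i < m1 \<and> m1 \<le> j \<and> j < m1 + m2}"
    then obtain i j where ij: "i < m1" "m1 \<le> j" "j < m1 + m2" "{x, y} = {i, j}" by auto
    have "\<phi> i \<in> X" "\<phi> j \<in> Y" using \<phi>X \<phi>Y ij by auto
    hence "c (\<phi> i) (\<phi> j) = col" "c (\<phi> j) (\<phi> i) = col" using col csym XY(1-3) by (metis disjoint_iff lessThan_iff subsetD)+
    thus "c (\<phi> x) (\<phi> y) = col" using ij(4) by (auto simp: doubleton_eq_iff)
  qed
qed

lemma colouring_has_mono_copy:
  assumes m: "m1 \<ge> 1" "m2 \<ge> 1" and ns: "length ns = Suc t" "\<forall>i<Suc t. 2 * K + 2 \<le> ns ! i \<and> ns ! i \<le> m2"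
    and N: "f_seq (Suc t) m1 m2 \<le> 2 ^ K" "f_seq (Suc t) m1 m2 \<le> N"
    and c: "is_colouring N (Suc (Suc t)) c"
  shows "\<exists>i < Suc (Suc t). has_mono_copy N c (i + 1) ((map cycle_graph ns @ [complete_bipartite m1 m2]) ! i)"
proof -
  have csym: "\<forall>x y. x < N \<longrightarrow> y < N \<longrightarrow> x \<noteq> y \<longrightarrow> c x y = c y x"
    and range: "\<And>x y. x < N \<Longrightarrow> y < N \<Longrightarrow> x \<noteq> y \<Longrightarrow> c x y \<in> {1..Suc (Suc t)}"
    using c unfolding is_colouring_def by auto
  have "(\<exists>i<Suc t. mono_cycle c (Suc i) (ns ! i) {..<N}) \<or> colour_hole c (Suc t) m1 m2 {..<N}"
    using mono_cycle_or_colour_hole[OF m ns N(1)] csym N(2) by simp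
  thus ?thesis
  proof
    assume "\<exists>i<Suc t. mono_cycle c (Suc i) (ns ! i) {..<N}"
    then obtain i cyc where i: "i < Suc t" "is_cycle (\<lambda>u v. c u v = Suc i) {..<N} (ns ! i) cyc"
      unfolding mono_cycle_def by blast
    have "2 \<le> ns ! i" using ns(2) i(1) by fastforce
    hence "has_mono_copy N c (Suc i) (cycle_graph (ns ! i))" using has_mono_copy_cycle_graph i(2) csym by blast
    thus ?thesis using i(1) ns(1) by (intro exI[of _ i]) (simp add: nth_append)
  next
    assume "colour_hole c (Suc t) m1 m2 {..<N}"
    then obtain X Y where XY: "X \<subseteq> {..<N}" "Y \<subseteq> {..<N}" "X \<inter> Y = {}" "card X = m1" "card Y = m2"
      "finite X" "finite Y" "\<forall>x\<in>X. \<forall>y\<in>Y. c x y \<notin> {1..Suc t}" unfolding colour_hole_def by blast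
    have "\<forall>x\<in>X. \<forall>y\<in>Y. c x y = Suc (Suc t)"
    proof (intro ballI)
      fix x y assume "x \<in> X" "y \<in> Y"
      hence "c x y \<in> {1..Suc (Suc t)}" "c x y \<notin> {1..Suc t}" using range XY by blast+
      thus "c x y = Suc (Suc t)" by auto
    qed
    hence "has_mono_copy N c (Suc (Suc t)) (complete_bipartite m1 m2)"
      using has_mono_copy_complete_bipartite[OF XY(1-7) _ csym] by blast
    thus ?thesis using ns(1) by (intro exI[of _ "Suc t"]) (simp add: nth_append)
  qed
qed

lemma le_two_power_nat_ceiling_log:
  assumes "1 \<le> N"
  shows "N \<le> 2 ^ nat \<lceil>log 2 (real N)\<rceil>"
proof -
  have "0 \<le> log 2 (real N)" using assms by simp
  hence L: "0 \<le> \<lceil>log 2 (real N)\<rceil>" by simp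
  have "real N = 2 powr (log 2 (real N))" using assms by simp
  also have "\<dots> \<le> 2 powr (real (nat \<lceil>log 2 (real N)\<rceil>))"
    using L by (intro powr_mono) (simp_all add: le_of_int_ceiling)
  also have "\<dots> = 2 ^ nat \<lceil>log 2 (real N)\<rceil>" by (simp add: powr_realpow)
  finally show ?thesis by (simp add: of_nat_le_iff[symmetric] del: of_nat_le_iff)
qed

theorem theorem2p9:
  fixes t m1 m2 :: nat and ns :: "nat list"
  assumes "t \<ge> 1" and "m1 \<ge> 1" and "m2 \<ge> 1"
    and "length ns = t"
    and "\<forall>i < t. ns ! i \<ge> 1 \<and> ns ! i \<le> m2 \<and>
           int (ns ! i) \<ge> 2 * \<lceil>log 2 (real (f_seq t m1 m2))\<rceil> + 2"
  shows "ramsey_number (map cycle_graph ns @ [complete_bipartite m1 m2]) \<le> f_seq t m1 m2"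
proof -
  obtain t' where t: "t = Suc t'" using assms(1) by (cases t) auto
  define N where "N = f_seq t m1 m2"
  define K where "K = nat \<lceil>log 2 (real N)\<rceil>"
  have N: "1 \<le> N" unfolding N_def t using f_seq_ge[of m1 m2 t'] assms(2) by linarith
  hence "0 \<le> log 2 (real N)" by simp
  hence NK: "N \<le> 2 ^ K" "int K = \<lceil>log 2 (real N)\<rceil>"
    unfolding K_def using le_two_power_nat_ceiling_log[OF N] by auto
  have ns: "\<forall>i<Suc t'. 2 * K + 2 \<le> ns ! i \<and> ns ! i \<le> m2"
  proof (intro allI impI)
    fix i assume "i < Suc t'"
    hence "2 * \<lceil>log 2 (real N)\<rceil> + 2 \<le> int (ns ! i)" "ns ! i \<le> m2"
      using assms(5) unfolding N_def t by auto
    thus "2 * K + 2 \<le> ns ! i \<and> ns ! i \<le> m2" using NK(2) by linarith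
  qed
  let ?Gs = "map cycle_graph ns @ [complete_bipartite m1 m2]"
  have "\<forall>c. is_colouring N (length ?Gs) c \<longrightarrow> (\<exists>i < length ?Gs. has_mono_copy N c (i + 1) (?Gs ! i))"
  proof (intro allI impI)
    fix c assume "is_colouring N (length ?Gs) c"
    hence "is_colouring N (Suc (Suc t')) c" using assms(4) t by simp
    from colouring_has_mono_copy[OF assms(2,3) _ ns _ _ this] NK(1)
    show "\<exists>i < length ?Gs. has_mono_copy N c (i + 1) (?Gs ! i)" using assms(4) unfolding N_def t by simp
  qed
  thus ?thesis unfolding ramsey_number_def N_def by (rule Least_le)
qed

end
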